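(* For every integer $n\ge 3$, $$Kf(M_n)=\frac{n^{3}-n}{6}+2n\sum_{i=1}^{n}\frac{1}{\beta_{i}},$$ where $\beta_1,\dots,\beta_n$ are the eigenvalues (counted with multiplicity) of the $n\times n$ matrix $L_S$, and all of them are positive.
   Context: For an integer $n\ge 3$, the Möbius polyomino network $M_n$ is the graph with vertex set $\{1,\dots,n\}\cup\{1',\dots,n'\}$ whose edges are $\{i,i+1\}$ and $\{i',(i+1)'\}$ for $1\le i\le n-1$, $\{i,i'\}$ for $1\le i\le n$, and the two edges $\{1,n'\}$ and $\{1',n\}$. It has $2n$ vertices and $3n$ edges, and every vertex has degree $3$. The Kirchhoff index of a connected graph $G$ is $Kf(G)=\sum_{i<j}r_{ij}$, where $r_{ij}$ is the resistance distance between vertices $i$ and $j$; equivalently $Kf(G)=N\sum_{k=2}^{N}1/\mu_k$, where $N=|V(G)|$ and $0=\mu_1<\mu_2\le\dots\le\mu_N$ are the Laplacian eigenvalues of $G$ (Laplacian $L=D-A$). $L_S$ denotes the $n\times n$ matrix with all diagonal entries equal to $4$, entries $(i,i+1)$ and $(i+1,i)$ equal to $-1$ for $1\le i\le n-1$, entries $(1,n)$ and $(n,1)$ equal to $+1$, and all other entries $0$. *)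

theory Defs
  imports "Jordan_Normal_Form.Char_Poly"
begin

(* Vertex encoding (0-based): unprimed vertex i (1<=i<=n) is i-1,
   primed vertex i' is n+i-1.  Vertex set {0..<2n}. *)
definition mobius_edges :: "nat \<Rightarrow> nat set set" where
  "mobius_edges n =
     {{i, i+1} | i. i + 1 < n}
   \<union> {{n+i, n+i+1} | i. i + 1 < n}
   \<union> {{i, n+i} | i. i < n}
   \<union> {{0, 2*n - 1}, {n, n - 1}}"

definition mobius_adj :: "nat \<Rightarrow> nat \<Rightarrow> nat \<Rightarrow> bool" where
  "mobius_adj n u v \<longleftrightarrow> u \<noteq> v \<and> {u, v} \<in> mobius_edges n"

definition mobius_laplacian :: "nat \<Rightarrow> real mat" where
  "mobius_laplacian n = mat (2*n) (2*n) (\<lambda>(u,v).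
     if u = v then real (card {w. w < 2*n \<and> mobius_adj n u w})
     else if mobius_adj n u v then -1 else 0)"

definition sorted_eigenvalues :: "real mat \<Rightarrow> real list" where
  "sorted_eigenvalues A = (THE mus. sorted mus \<and> length mus = dim_row A \<and>
      char_poly A = (\<Prod>m\<leftarrow>mus. [:-m, 1:]))"

definition kirchhoff_index :: "real mat \<Rightarrow> real" where
  "kirchhoff_index L = real (dim_row L) *
      (\<Sum>m\<leftarrow>tl (sorted_eigenvalues L). 1 / m)"

definition L_S :: "nat \<Rightarrow> real mat" where
  "L_S n = mat n n (\<lambda>(i,j).
     if i = j then 4
     else if j = i + 1 \<or> i = j + 1 then -1
     else if (i = 0 \<and> j = n - 1) \<or> (i = n - 1 \<and> j = 0) then 1
     else 0)"

end

theory Submission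
  imports Defs "Berlekamp_Zassenhaus.Mahler_Measure"
begin

(* With vertex i' encoded as n + i, the Laplacian of M_n is the block matrix [[A, B], [B, A]],
   where A + B is the Laplacian of the cycle C_n and A - B = L_S; conjugation by [[I, I], [I, -I]]
   splits its spectrum into those of C_n and of L_S. Both are twisted circulants, with corner
   entries -s for s = 1 resp. s = -1, and are diagonalised by the Fourier basis l |-> e^(i l t_k),
   t_k = (2 pi k + phi) / n with e^(i phi) = s. Their eigenvalues are 2 - 2 cos (2 pi k / n) and
   4 - 2 cos ((2 k + 1) pi / n), positive except for the single zero of the cycle.
   The reciprocals of the nonzero cycle eigenvalues are the Fourier coefficients of the Green's
   function z_l = - l (n - l) / (2 n), which solves C z = e_0 - 1/n; since z_0 = 0 they add up to
   - (z_0 + ... + z_(n-1)) = (n^2 - 1) / 12, and Kf(M_n) = 2 n ((n^2 - 1) / 12 + sum 1 / beta_k). *)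

lemma sorted_eigenvalues_eq_sort:
  assumes "A \<in> carrier_mat m m" and "length xs = m"
    and "char_poly A = (\<Prod>x\<leftarrow>xs. [:-x, 1:])"
  shows "sorted_eigenvalues A = sort xs"
  unfolding sorted_eigenvalues_def
proof (rule the_equality)
  have "(\<Prod>x\<leftarrow>sort xs. [:-x, 1:]) = (\<Prod>x\<leftarrow>xs. [:-x, 1:])"
    by (simp only: prod_mset_prod_list[symmetric] mset_map mset_sort)
  then show "sorted (sort xs) \<and> length (sort xs) = dim_row A \<and>
      char_poly A = (\<Prod>m\<leftarrow>sort xs. [:-m, 1:])"
    using assms by simp
next
  fix ys
  assume ys: "sorted ys \<and> length ys = dim_row A \<and> char_poly A = (\<Prod>m\<leftarrow>ys. [:-m, 1:])"
  then have "mset ys = mset xs"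
    using assms(3) by (intro reconstruct_poly_monic_defines_mset) simp
  then show "ys = sort xs"
    using ys by (simp add: properties_for_sort)
qed

lemma kirchhoff_index_eq_sum_inverse:
  assumes L: "L \<in> carrier_mat N N" and len: "length xs + 1 = N"
    and char: "char_poly L = (\<Prod>x\<leftarrow>0 # xs. [:-x, 1:])" and pos: "\<forall>x\<in>set xs. x > 0"
  shows "kirchhoff_index L = real N * (\<Sum>x\<leftarrow>xs. 1 / x)"
proof -
  have "sorted_eigenvalues L = sort (0 # xs)"
    using L len char by (intro sorted_eigenvalues_eq_sort) auto
  also have "\<dots> = 0 # sort xs"
    using pos by (simp add: insort_is_Cons less_imp_le)
  finally have "tl (sorted_eigenvalues L) = sort xs" by simp
  moreover have "(\<Sum>x\<leftarrow>sort xs. 1 / x) = (\<Sum>x\<leftarrow>xs. 1 / x)"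
    by (simp only: sum_mset_sum_list[symmetric] mset_map mset_sort)
  ultimately show ?thesis
    using L by (simp add: kirchhoff_index_def)
qed

lemma char_poly_diagonalized:
  fixes A F G :: "'a::field mat"
  assumes A: "A \<in> carrier_mat n n" and F: "F \<in> carrier_mat n n" and G: "G \<in> carrier_mat n n"
    and GF: "G * F = 1\<^sub>m n" and AF: "A * F = F * mat_diag n d"
  shows "char_poly A = (\<Prod>k\<leftarrow>[0..<n]. [:-d k, 1:])"
proof -
  have FG: "F * G = 1\<^sub>m n" by (rule mat_mult_left_right_inverse[OF G F GF])
  have "A = A * F * G"
    using A F G FG by (simp add: assoc_mult_mat)
  then have "A = F * mat_diag n d * G"
    by (simp only: AF)
  then have "similar_mat A (mat_diag n d)"
    using A F G FG GF by (intro similar_matI[of _ _ F G n]) auto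
  then have "char_poly A = char_poly (mat_diag n d)" by (rule char_poly_similar)
  also have "\<dots> = (\<Prod>a\<leftarrow>diag_mat (mat_diag n d). [:-a, 1:])"
    by (rule char_poly_upper_triangular[OF mat_diag_dim]) (simp add: upper_triangular_def mat_diag_def)
  also have "diag_mat (mat_diag n d) = map d [0..<n]"
    by (rule nth_equalityI) (auto simp: diag_mat_def mat_diag_def)
  finally show ?thesis by (simp add: o_def)
qed

interpretation of_real_poly_hom: map_poly_inj_idom_hom complex_of_real ..

lemma char_poly_of_real_mat:
  fixes A :: "real mat"
  assumes A: "A \<in> carrier_mat n n"
    and char: "char_poly (map_mat complex_of_real A) = (\<Prod>x\<leftarrow>xs. [:-complex_of_real x, 1:])"
  shows "char_poly A = (\<Prod>x\<leftarrow>xs. [:-x, 1:])"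
proof -
  have "map_poly complex_of_real (char_poly A) = char_poly (map_mat complex_of_real A)"
    by (rule of_real_hom.char_poly_hom[OF A, symmetric])
  also have "\<dots> = map_poly complex_of_real (\<Prod>x\<leftarrow>xs. [:-x, 1:])"
    unfolding char of_real_poly_hom.hom_prod_list by (simp add: o_def)
  finally show ?thesis by (rule of_real_poly_hom.injectivity)
qed

lemma char_poly_four_block_diag:
  fixes A :: "'a::idom mat"
  assumes A: "A \<in> carrier_mat n n" and B: "B \<in> carrier_mat m m"
  shows "char_poly (four_block_mat A (0\<^sub>m n m) (0\<^sub>m m n) B) = char_poly A * char_poly B"
proof -
  have "char_poly_matrix (four_block_mat A (0\<^sub>m n m) (0\<^sub>m m n) B) =
      four_block_mat (char_poly_matrix A) (0\<^sub>m n m) (0\<^sub>m m n) (char_poly_matrix B)"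
    using A B by (intro eq_matI) (auto simp: char_poly_matrix_def)
  then show ?thesis
    unfolding char_poly_def using A B by (simp add: det_four_block_mat_upper_right_zero[of _ n _ m])
qed

lemma char_poly_four_block_symmetric:
  fixes A B :: "'a::field_char_0 mat"
  assumes A: "A \<in> carrier_mat n n" and B: "B \<in> carrier_mat n n"
  shows "char_poly (four_block_mat A B B A) = char_poly (A + B) * char_poly (A - B)"
proof -
  define P :: "'a mat" where "P = four_block_mat (1\<^sub>m n) (1\<^sub>m n) (1\<^sub>m n) (- 1\<^sub>m n)"
  define Q where "Q = (1 / 2 :: 'a) \<cdot>\<^sub>m P"
  define D where "D = four_block_mat (A + B) (0\<^sub>m n n) (0\<^sub>m n n) (A - B)"
  have carrier: "P \<in> carrier_mat (n + n) (n + n)" "Q \<in> carrier_mat (n + n) (n + n)"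
    "D \<in> carrier_mat (n + n) (n + n)"
    using A B by (auto simp: P_def Q_def D_def)
  have "P * P = 2 \<cdot>\<^sub>m 1\<^sub>m (n + n)"
    unfolding P_def by (subst mult_four_block_mat) (auto intro!: eq_matI)
  then have PQ: "P * Q = 1\<^sub>m (n + n)" and QP: "Q * P = 1\<^sub>m (n + n)"
    using carrier by (auto simp: Q_def mult_smult_distrib mult_smult_assoc_mat)
  let ?M = "four_block_mat A B B A"
  have M: "?M \<in> carrier_mat (n + n) (n + n)" using A by simp
  have MP: "?M * P = P * D"
    unfolding P_def D_def using A B
    by (subst (1 2) mult_four_block_mat) (auto simp: algebra_simps)
  have "?M = ?M * P * Q"
    using M carrier PQ by (simp add: assoc_mult_mat right_mult_one_mat[OF M])
  then have "?M = P * D * Q"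
    by (simp only: MP)
  then have "similar_mat ?M D"
    using M carrier PQ QP by (intro similar_matI[of _ _ P Q "n + n"]) auto
  then have "char_poly ?M = char_poly D"
    by (rule char_poly_similar)
  also have "\<dots> = char_poly (A + B) * char_poly (A - B)"
    unfolding D_def using A B by (intro char_poly_four_block_diag) auto
  finally show ?thesis .
qed

lemma sum_cis_root_of_unity:
  assumes n: "n > 0" and m: "\<bar>m\<bar> < int n"
  shows "(\<Sum>l<n. cis (real l * (2 * pi * of_int m / real n))) = (if m = 0 then of_nat n else 0)"
proof (cases "m = 0")
  case False
  define \<omega> where "\<omega> = cis (2 * pi * of_int m / real n)"
  have "\<omega> \<noteq> 1"
  proof
    assume "\<omega> = 1"
    then obtain k :: int where "2 * pi * of_int m / real n = of_int k * 2 * pi"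
      by (auto simp: \<omega>_def complex_eq_iff cos_one_2pi_int)
    with n have "of_int m = real n * of_int k" by (simp add: field_simps)
    then have mk: "m = int n * k" by (metis of_int_eq_iff of_int_mult of_int_of_nat_eq)
    with m have "int n * \<bar>k\<bar> < int n * 1" by (simp add: abs_mult)
    with n have "k = 0" by (simp add: mult_less_cancel_left)
    with mk False show False by simp
  qed
  have "(\<Sum>l<n. cis (real l * (2 * pi * of_int m / real n))) = (\<Sum>l<n. \<omega> ^ l)"
    by (simp add: \<omega>_def DeMoivre)
  also have "\<dots> = (\<omega> ^ n - 1) / (\<omega> - 1)" by (rule geometric_sum[OF \<open>\<omega> \<noteq> 1\<close>])
  also have "\<omega> ^ n = cis (2 * pi * of_int m)" using n by (simp add: \<omega>_def DeMoivre)
  also have "\<dots> = 1" by (rule cis_multiple_2pi) simp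
  finally show ?thesis using False by simp
qed simp

lemma cis_add_plus_cis_diff: "cis (a + b) + cis (a - b) = complex_of_real (2 * cos b) * cis a"
  by (simp add: complex_eq_iff cos_add cos_diff sin_add sin_diff)

lemma index_mult_mat_sum:
  assumes "A \<in> carrier_mat n m" "B \<in> carrier_mat m p" "i < n" "j < p"
  shows "(A * B) $$ (i,j) = (\<Sum>l<m. A $$ (i,l) * B $$ (l,j))"
  using assms by (simp add: scalar_prod_def lessThan_atLeast0)

definition twisted_cycle_mat :: "nat \<Rightarrow> real \<Rightarrow> real \<Rightarrow> real mat" where
  "twisted_cycle_mat n c s = mat n n (\<lambda>(i,j).
     if i = j then c
     else if j = i + 1 \<or> i = j + 1 then -1
     else if (i = 0 \<and> j = n - 1) \<or> (i = n - 1 \<and> j = 0) then -s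
     else 0)"

lemma twisted_cycle_mat_carrier [simp]: "twisted_cycle_mat n c s \<in> carrier_mat n n"
  by (simp add: twisted_cycle_mat_def)

lemma twisted_cycle_mat_dim [simp]:
  "dim_row (twisted_cycle_mat n c s) = n" "dim_col (twisted_cycle_mat n c s) = n"
  by (simp_all add: twisted_cycle_mat_def)

lemma twisted_cycle_mat_symmetric:
  "i < n \<Longrightarrow> j < n \<Longrightarrow>
    twisted_cycle_mat n c s $$ (i,j) = twisted_cycle_mat n c s $$ (j,i)"
  by (auto simp: twisted_cycle_mat_def)

lemma twisted_cycle_mat_row_entry:
  assumes n: "n \<ge> 3" and j: "j < n" and l: "l < n"
    and p: "p = (if j + 1 < n then j + 1 else 0)" and q: "q = (if 0 < j then j - 1 else n - 1)"
  shows "twisted_cycle_mat n c s $$ (j,l) = (if l = j then c else 0)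
    - (if l = p then (if j + 1 < n then 1 else s) else 0)
    - (if l = q then (if 0 < j then 1 else s) else 0)"
proof -
  have M: "twisted_cycle_mat n c s $$ (j,l) = (if j = l then c else if l = j + 1 \<or> j = l + 1 then -1
      else if (j = 0 \<and> l = n - 1) \<or> (j = n - 1 \<and> l = 0) then -s else 0)"
    using j l by (simp add: twisted_cycle_mat_def)
  have pq: "p \<noteq> j" "q \<noteq> j" "p \<noteq> q"
    using n j by (auto simp: p q)
  consider "l = j" | "l = p" | "l = q" | "l \<noteq> j" "l \<noteq> p" "l \<noteq> q" by blast
  then show ?thesis
  proof cases
    case 1
    then show ?thesis using M pq by simp
  next
    case 2
    then show ?thesis using M pq n j unfolding p by (cases "j + 1 < n") auto
  next
    case 3
    then show ?thesis using M pq n j unfolding q by (cases "0 < j") auto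
  next
    case 4
    then have "l \<noteq> j + 1" "j \<noteq> l + 1" "\<not> (j = 0 \<and> l = n - 1)" "\<not> (j = n - 1 \<and> l = 0)"
      using n l unfolding p q by (auto split: if_splits)
    then show ?thesis using M 4 by auto
  qed
qed

lemma twisted_cycle_mat_row_sum:
  fixes x :: "nat \<Rightarrow> 'a::real_algebra_1"
  assumes n: "n \<ge> 3" and j: "j < n"
  shows "(\<Sum>l<n. of_real (twisted_cycle_mat n c s $$ (j,l)) * x l) =
    of_real c * x j
    - of_real (if j + 1 < n then 1 else s) * x (if j + 1 < n then j + 1 else 0)
    - of_real (if 0 < j then 1 else s) * x (if 0 < j then j - 1 else n - 1)"
proof -
  define p where "p = (if j + 1 < n then j + 1 else 0)"
  define q where "q = (if 0 < j then j - 1 else n - 1)"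
  have pq: "p < n" "q < n" "p \<noteq> j" "q \<noteq> j" "p \<noteq> q"
    using n j by (auto simp: p_def q_def)
  have "(\<Sum>l<n. of_real (twisted_cycle_mat n c s $$ (j,l)) * x l) =
      (\<Sum>l<n. (if l = j then of_real c * x j else 0)
        - (if l = p then of_real (if j + 1 < n then 1 else s) * x p else 0)
        - (if l = q then of_real (if 0 < j then 1 else s) * x q else 0))"
    by (intro sum.cong refl) (auto simp: twisted_cycle_mat_row_entry[OF n j _ p_def q_def] algebra_simps)
  also have "\<dots> = of_real c * x j - of_real (if j + 1 < n then 1 else s) * x p
      - of_real (if 0 < j then 1 else s) * x q"
    using pq j by (simp add: sum_subtractf)
  finally show ?thesis by (simp add: p_def q_def)
qed

lemma twisted_cycle_mat_eigenvector:
  assumes n: "n \<ge> 3" and j: "j < n"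
    and s: "cis (real n * t) = complex_of_real s" and s2: "s * s = 1"
  shows "(\<Sum>l<n. complex_of_real (twisted_cycle_mat n c s $$ (j,l)) * cis (real l * t)) =
     complex_of_real (c - 2 * cos t) * cis (real j * t)"
proof -
  have succ: "complex_of_real (if j + 1 < n then 1 else s) * cis (real (if j + 1 < n then j + 1 else 0) * t)
      = cis ((real j + 1) * t)"
  proof (cases "j + 1 < n")
    case False
    then have "real j + 1 = real n" using j by simp
    then show ?thesis using False s by simp
  qed (simp add: algebra_simps)
  have pred: "complex_of_real (if 0 < j then 1 else s) * cis (real (if 0 < j then j - 1 else n - 1) * t)
      = cis ((real j - 1) * t)"
  proof (cases "0 < j")
    case False
    have "real (n - 1) * t = real n * t + - t"
      using n by (simp add: of_nat_diff algebra_simps)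
    then have "cis (real (n - 1) * t) = cis (real n * t) * cis (- t)"
      by (simp only: cis_mult)
    then have "complex_of_real s * cis (real (n - 1) * t) = complex_of_real (s * s) * cis (- t)"
      by (simp add: s)
    then show ?thesis using False s2 by simp
  qed (simp add: of_nat_diff algebra_simps)
  have "cis ((real j + 1) * t) + cis ((real j - 1) * t) = complex_of_real (2 * cos t) * cis (real j * t)"
    using cis_add_plus_cis_diff[of "real j * t" t] by (simp add: algebra_simps)
  then show ?thesis
    unfolding twisted_cycle_mat_row_sum[OF n j] succ pred by (simp add: algebra_simps)
qed

definition fourier_angle :: "nat \<Rightarrow> real \<Rightarrow> nat \<Rightarrow> real" where
  "fourier_angle n \<phi> k = (2 * pi * real k + \<phi>) / real n"

definition fourier_mat :: "nat \<Rightarrow> real \<Rightarrow> complex mat" where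
  "fourier_mat n \<phi> = mat n n (\<lambda>(l,k). cis (real l * fourier_angle n \<phi> k))"

definition inv_fourier_mat :: "nat \<Rightarrow> real \<Rightarrow> complex mat" where
  "inv_fourier_mat n \<phi> = mat n n (\<lambda>(k,l). cis (- (real l * fourier_angle n \<phi> k)) / of_nat n)"

lemma fourier_mat_carrier [simp]: "fourier_mat n \<phi> \<in> carrier_mat n n"
  by (simp add: fourier_mat_def)

lemma inv_fourier_mat_carrier [simp]: "inv_fourier_mat n \<phi> \<in> carrier_mat n n"
  by (simp add: inv_fourier_mat_def)

lemma inv_fourier_mat_mult_fourier_mat:
  assumes n: "n > 0"
  shows "inv_fourier_mat n \<phi> * fourier_mat n \<phi> = 1\<^sub>m n"
proof (rule eq_matI)
  fix k k' assume "k < dim_row (1\<^sub>m n :: complex mat)" "k' < dim_col (1\<^sub>m n :: complex mat)"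
  then have k: "k < n" "k' < n" by auto
  have diff: "cis (- (real l * fourier_angle n \<phi> k)) * cis (real l * fourier_angle n \<phi> k') =
      cis (real l * (2 * pi * of_int (int k' - int k) / real n))" for l
  proof -
    have "- (real l * fourier_angle n \<phi> k) + real l * fourier_angle n \<phi> k' =
        real l * (2 * pi * of_int (int k' - int k) / real n)"
      using n by (simp add: fourier_angle_def field_simps)
    then show ?thesis by (simp only: cis_mult)
  qed
  have "(inv_fourier_mat n \<phi> * fourier_mat n \<phi>) $$ (k,k') =
      (\<Sum>l<n. cis (- (real l * fourier_angle n \<phi> k)) / of_nat n *
        cis (real l * fourier_angle n \<phi> k'))"
    using k by (subst index_mult_mat_sum[of _ n n _ n]) (auto simp: inv_fourier_mat_def fourier_mat_def)
  also have "\<dots> = (\<Sum>l<n. cis (real l * (2 * pi * of_int (int k' - int k) / real n))) / of_nat n"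
    unfolding sum_divide_distrib by (intro sum.cong refl) (metis diff times_divide_eq_left)
  also have "\<dots> = 1\<^sub>m n $$ (k,k')"
    using k n by (subst sum_cis_root_of_unity) auto
  finally show "(inv_fourier_mat n \<phi> * fourier_mat n \<phi>) $$ (k,k') = 1\<^sub>m n $$ (k,k')" .
qed (auto simp: inv_fourier_mat_def fourier_mat_def)

lemma cis_mult_fourier_angle:
  assumes n: "n > 0" and s: "cis \<phi> = complex_of_real s"
  shows "cis (real n * fourier_angle n \<phi> k) = complex_of_real s"
proof -
  have "cis (real n * fourier_angle n \<phi> k) = cis (\<phi> + 2 * pi * real k)"
    using n by (simp add: fourier_angle_def field_simps)
  also have "\<dots> = cis \<phi> * cis (2 * pi * real k)"
    by (simp only: cis_mult)
  also have "cis (2 * pi * real k) = 1" by (rule cis_multiple_2pi) simp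
  finally show ?thesis using s by simp
qed

lemma sum_cis_fourier_angle:
  assumes n: "n > 0" and k: "k < n"
  shows "(\<Sum>j<n. cis (- (real j * fourier_angle n 0 k))) = (if k = 0 then of_nat n else 0)"
proof -
  have "(\<Sum>j<n. cis (- (real j * fourier_angle n 0 k))) =
      (\<Sum>j<n. cis (real j * (2 * pi * of_int (- int k) / real n)))"
    by (intro sum.cong refl) (simp add: fourier_angle_def)
  also have "\<dots> = (if k = 0 then of_nat n else 0)"
    using n k by (subst sum_cis_root_of_unity) auto
  finally show ?thesis .
qed

lemma twisted_cycle_mat_mult_fourier_mat:
  assumes n: "n \<ge> 3" and s: "cis \<phi> = complex_of_real s" and s2: "s * s = 1"
  shows "map_mat complex_of_real (twisted_cycle_mat n c s) * fourier_mat n \<phi> =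
     fourier_mat n \<phi> * mat_diag n (\<lambda>k. complex_of_real (c - 2 * cos (fourier_angle n \<phi> k)))"
    (is "?M * ?F = ?F * mat_diag n ?d")
proof (rule eq_matI)
  fix j k assume "j < dim_row (?F * mat_diag n ?d)" "k < dim_col (?F * mat_diag n ?d)"
  then have jk: "j < n" "k < n" by (auto simp: fourier_mat_def mat_diag_def)
  have "(?M * ?F) $$ (j,k) = (\<Sum>l<n. complex_of_real (twisted_cycle_mat n c s $$ (j,l)) *
      cis (real l * fourier_angle n \<phi> k))"
    using jk by (subst index_mult_mat_sum[of _ n n _ n]) (auto simp: fourier_mat_def intro!: sum.cong)
  also have "\<dots> = ?d k * cis (real j * fourier_angle n \<phi> k)"
    using n s by (intro twisted_cycle_mat_eigenvector[OF n jk(1) cis_mult_fourier_angle s2]) auto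
  also have "\<dots> = (?F * mat_diag n ?d) $$ (j,k)"
    using jk by (simp add: mat_diag_mult_right[OF fourier_mat_carrier]) (simp add: fourier_mat_def)
  finally show "(?M * ?F) $$ (j,k) = (?F * mat_diag n ?d) $$ (j,k)" .
qed (auto simp: fourier_mat_def mat_diag_def)

lemma char_poly_twisted_cycle_mat:
  assumes n: "n \<ge> 3" and s: "cis \<phi> = complex_of_real s" and s2: "s * s = 1"
  shows "char_poly (twisted_cycle_mat n c s) =
    (\<Prod>x\<leftarrow>map (\<lambda>k. c - 2 * cos (fourier_angle n \<phi> k)) [0..<n]. [:-x, 1:])"
proof (rule char_poly_of_real_mat[OF twisted_cycle_mat_carrier])
  show "char_poly (map_mat complex_of_real (twisted_cycle_mat n c s)) =
      (\<Prod>x\<leftarrow>map (\<lambda>k. c - 2 * cos (fourier_angle n \<phi> k)) [0..<n].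
        [:-complex_of_real x, 1:])"
    using n char_poly_diagonalized[OF _ fourier_mat_carrier inv_fourier_mat_carrier
        inv_fourier_mat_mult_fourier_mat twisted_cycle_mat_mult_fourier_mat[OF n s s2]]
    by (simp add: o_def)
qed

lemma mobius_adj_iff:
  assumes "n > 0"
  shows "mobius_adj n u v \<longleftrightarrow> u \<noteq> v \<and>
    ((u < n \<and> v < n \<and> (u + 1 = v \<or> v + 1 = u))
     \<or> (n \<le> u \<and> n \<le> v \<and> u < 2 * n \<and> v < 2 * n \<and> (u + 1 = v \<or> v + 1 = u))
     \<or> (u < n \<and> v = u + n) \<or> (v < n \<and> u = v + n)
     \<or> (u = 0 \<and> v + 1 = 2 * n) \<or> (u + 1 = 2 * n \<and> v = 0)
     \<or> (u = n \<and> v + 1 = n) \<or> (u + 1 = n \<and> v = n))"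
proof -
  have path: "(\<exists>i. {u, v} = {a + i, a + i + 1} \<and> i + 1 < n) \<longleftrightarrow>
      a \<le> u \<and> a \<le> v \<and> u < a + n \<and> v < a + n \<and> (u + 1 = v \<or> v + 1 = u)" for a
  proof
    assume "a \<le> u \<and> a \<le> v \<and> u < a + n \<and> v < a + n \<and> (u + 1 = v \<or> v + 1 = u)"
    then show "\<exists>i. {u, v} = {a + i, a + i + 1} \<and> i + 1 < n"
      by (intro exI[of _ "min u v - a"]) (auto simp: doubleton_eq_iff)
  qed (auto simp: doubleton_eq_iff)
  have rung: "(\<exists>i. {u, v} = {i, n + i} \<and> i < n) \<longleftrightarrow>
      (u < n \<and> v = u + n) \<or> (v < n \<and> u = v + n)"
  proof
    assume "(u < n \<and> v = u + n) \<or> (v < n \<and> u = v + n)"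
    then show "\<exists>i. {u, v} = {i, n + i} \<and> i < n"
      by (intro exI[of _ "min u v"]) (auto simp: doubleton_eq_iff)
  qed (auto simp: doubleton_eq_iff)
  have pred: "x = n + n - 1 \<longleftrightarrow> x + 1 = n + n" "x = n - 1 \<longleftrightarrow> x + 1 = n" for x
    using assms by arith+
  show ?thesis
    unfolding mobius_adj_def mobius_edges_def Un_iff insert_iff empty_iff mem_Collect_eq
    unfolding path[of 0, unfolded add_0] path[of n] rung
    unfolding doubleton_eq_iff mult_2 pred
    by (simp only: disj_assoc simp_thms le0)
qed
lemma card_mobius_neighbours:
  assumes n: "n \<ge> 3" and u: "u < 2 * n"
  shows "card {w. w < 2 * n \<and> mobius_adj n u w} = 3"
proof -
  obtain a b c
    where abc: "\<And>w. w < 2 * n \<Longrightarrow> mobius_adj n u w \<longleftrightarrow> w = a \<or> w = b \<or> w = c"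
    and "a < 2 * n" "b < 2 * n" "c < 2 * n" "a \<noteq> b" "a \<noteq> c" "b \<noteq> c"
  proof (cases "u < n")
    case True
    show ?thesis
    proof (rule that[of "u + n" "if u + 1 < n then u + 1 else n" "if 0 < u then u - 1 else 2 * n - 1"])
      show "mobius_adj n u w \<longleftrightarrow> w = u + n \<or> w = (if u + 1 < n then u + 1 else n)
          \<or> w = (if 0 < u then u - 1 else 2 * n - 1)" if w: "w < 2 * n" for w
        using n True w by (cases "u = 0"; cases "u + 1 < n") (auto simp: mobius_adj_iff)
    qed (use n True in auto)
  next
    case False
    show ?thesis
    proof (rule that[of "u - n" "if u + 1 < 2 * n then u + 1 else 0" "if n < u then u - 1 else n - 1"])
      show "mobius_adj n u w \<longleftrightarrow> w = u - n \<or> w = (if u + 1 < 2 * n then u + 1 else 0)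
          \<or> w = (if n < u then u - 1 else n - 1)" if w: "w < 2 * n" for w
        using n u False w by (cases "u = n"; cases "u + 1 < 2 * n") (auto simp: mobius_adj_iff)
    qed (use n u False in auto)
  qed
  then have "{w. w < 2 * n \<and> mobius_adj n u w} = {a, b, c}"
    by auto
  then show ?thesis
    using \<open>a \<noteq> b\<close> \<open>a \<noteq> c\<close> \<open>b \<noteq> c\<close> by simp
qed

(* side: the path inside one copy of {1..n}; cross: the rungs i -- i' and the twisted edges *)
definition mobius_side_block :: "nat \<Rightarrow> real mat" where
  "mobius_side_block n = mat n n (\<lambda>(i,j).
     if i = j then 3 else if j = i + 1 \<or> i = j + 1 then -1 else 0)"

definition mobius_cross_block :: "nat \<Rightarrow> real mat" where
  "mobius_cross_block n = mat n n (\<lambda>(i,j).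
     if i = j \<or> (i = 0 \<and> j = n - 1) \<or> (i = n - 1 \<and> j = 0) then -1 else 0)"

lemma mobius_block_dims [simp]:
  "dim_row (mobius_side_block n) = n" "dim_col (mobius_side_block n) = n"
  "dim_row (mobius_cross_block n) = n" "dim_col (mobius_cross_block n) = n"
  by (simp_all add: mobius_side_block_def mobius_cross_block_def)

lemma mobius_laplacian_eq_four_block:
  assumes n: "n \<ge> 3"
  shows "mobius_laplacian n = four_block_mat (mobius_side_block n) (mobius_cross_block n)
    (mobius_cross_block n) (mobius_side_block n)" (is "_ = ?B")
proof (rule eq_matI)
  fix i j assume "i < dim_row ?B" "j < dim_col ?B"
  then have ij: "i < 2 * n" "j < 2 * n" by auto
  have L: "mobius_laplacian n $$ (i,j) = (if i = j then 3 else if mobius_adj n i j then -1 else 0)"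
    using ij card_mobius_neighbours[OF n] by (simp add: mobius_laplacian_def)
  have n0: "n > 0" using n by simp
  consider "i < n" "j < n" | "i < n" "n \<le> j" | "n \<le> i" "j < n" | "n \<le> i" "n \<le> j"
    by linarith
  then show "mobius_laplacian n $$ (i,j) = ?B $$ (i,j)"
    unfolding L mobius_adj_iff[OF n0]
    by cases (use n ij in \<open>auto simp: mobius_side_block_def mobius_cross_block_def\<close>)
qed (auto simp: mobius_laplacian_def)

lemma mobius_side_block_plus_cross_block:
  "n \<ge> 3 \<Longrightarrow> mobius_side_block n + mobius_cross_block n = twisted_cycle_mat n 2 1"
  by (rule eq_matI) (auto simp: mobius_side_block_def mobius_cross_block_def twisted_cycle_mat_def)

lemma mobius_side_block_minus_cross_block:
  "n \<ge> 3 \<Longrightarrow> mobius_side_block n - mobius_cross_block n = L_S n"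
  by (rule eq_matI) (auto simp: mobius_side_block_def mobius_cross_block_def L_S_def)

lemma L_S_eq_twisted_cycle_mat: "L_S n = twisted_cycle_mat n 4 (-1)"
  by (rule eq_matI) (auto simp: L_S_def twisted_cycle_mat_def)

lemma char_poly_mobius_laplacian:
  assumes n: "n \<ge> 3"
  shows "char_poly (mobius_laplacian n) = char_poly (twisted_cycle_mat n 2 1) * char_poly (L_S n)"
  unfolding mobius_laplacian_eq_four_block[OF n]
    mobius_side_block_plus_cross_block[OF n, symmetric]
    mobius_side_block_minus_cross_block[OF n, symmetric]
  by (rule char_poly_four_block_symmetric[where n = n])
    (simp_all add: mobius_side_block_def mobius_cross_block_def)

definition cycle_green :: "nat \<Rightarrow> nat \<Rightarrow> real" where
  "cycle_green n l = - (real l * (real n - real l)) / (2 * real n)"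

lemma cycle_mat_cycle_green:
  assumes n: "n \<ge> 3" and j: "j < n"
  shows "(\<Sum>l<n. twisted_cycle_mat n 2 1 $$ (j,l) * cycle_green n l) =
    (if j = 0 then 1 else 0) - 1 / real n"
proof -
  have "(\<Sum>l<n. twisted_cycle_mat n 2 1 $$ (j,l) * cycle_green n l) =
      2 * cycle_green n j - cycle_green n (if j + 1 < n then j + 1 else 0)
      - cycle_green n (if 0 < j then j - 1 else n - 1)"
    using twisted_cycle_mat_row_sum[OF n j, of 2 1 "cycle_green n"] by simp
  also have "\<dots> = (if j = 0 then 1 else 0) - 1 / real n"
  proof -
    consider "j = 0" | "0 < j" "j + 1 < n" | "0 < j" "n = j + 1"
      using j by linarith
    then show ?thesis
      by cases (use n in \<open>auto simp: cycle_green_def of_nat_diff field_simps\<close>)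
  qed
  finally show ?thesis .
qed

definition cycle_green_dft :: "nat \<Rightarrow> nat \<Rightarrow> complex" where
  "cycle_green_dft n k =
    (\<Sum>l<n. cis (- (real l * fourier_angle n 0 k)) * complex_of_real (cycle_green n l))"

lemma cycle_eigenvalue_mult_cycle_green_dft:
  assumes n: "n \<ge> 3" and k: "0 < k" "k < n"
  shows "complex_of_real (2 - 2 * cos (fourier_angle n 0 k)) * cycle_green_dft n k = 1"
proof -
  let ?\<theta> = "fourier_angle n 0 k" and ?C = "twisted_cycle_mat n 2 1" and ?z = "cycle_green n"
  define S where "S = (\<Sum>j<n. cis (- (real j * ?\<theta>)) * complex_of_real (\<Sum>l<n. ?C $$ (j,l) * ?z l))"
  have "S = (\<Sum>j<n. cis (- (real j * ?\<theta>)) * complex_of_real ((if j = 0 then 1 else 0) - 1 / real n))"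
    unfolding S_def by (intro sum.cong refl) (simp add: cycle_mat_cycle_green[OF n])
  also have "\<dots> = (\<Sum>j<n. (if j = 0 then 1 else 0) - cis (- (real j * ?\<theta>)) / of_nat n)"
    by (intro sum.cong refl) (auto simp: field_simps)
  also have "\<dots> = (\<Sum>j<n. (if j = 0 then 1 else 0)) -
      (\<Sum>j<n. cis (- (real j * ?\<theta>))) / of_nat n"
    by (simp add: sum_subtractf sum_divide_distrib)
  also have "\<dots> = 1"
    using n k by (simp add: sum_cis_fourier_angle)
  finally have "S = 1" .
  have cis_n: "cis (real n * (- ?\<theta>)) = complex_of_real 1"
  proof -
    have "real n * (- ?\<theta>) = 2 * pi * of_int (- int k)"
      using n by (simp add: fourier_angle_def)
    then show ?thesis by (simp del: of_int_minus)
  qed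
  have "S = (\<Sum>l<n. complex_of_real (?z l) *
      (\<Sum>j<n. complex_of_real (?C $$ (l,j)) * cis (real j * (- ?\<theta>))))"
    unfolding S_def of_real_sum sum_distrib_left
    by (subst sum.swap) (auto intro!: sum.cong simp: twisted_cycle_mat_symmetric algebra_simps)
  also have "\<dots> = (\<Sum>l<n. complex_of_real (?z l) *
      (complex_of_real (2 - 2 * cos ?\<theta>) * cis (real l * (- ?\<theta>))))"
    by (intro sum.cong refl, subst twisted_cycle_mat_eigenvector[OF n _ cis_n]) auto
  also have "\<dots> = complex_of_real (2 - 2 * cos ?\<theta>) * cycle_green_dft n k"
    unfolding cycle_green_dft_def sum_distrib_left by (intro sum.cong refl) (simp add: algebra_simps)
  finally show ?thesis using \<open>S = 1\<close> by simp
qed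

lemma cycle_eigenvalue_pos:
  assumes n: "n \<ge> 3" and k: "0 < k" "k < n"
  shows "2 - 2 * cos (fourier_angle n 0 k) > 0"
proof -
  have "2 - 2 * cos (fourier_angle n 0 k) \<noteq> 0"
    using cycle_eigenvalue_mult_cycle_green_dft[OF n k] by auto
  with cos_le_one[of "fourier_angle n 0 k"] show ?thesis by linarith
qed

lemma sum_cycle_green_dft:
  assumes n: "n \<ge> 3"
  shows "(\<Sum>k<n. cycle_green_dft n k) = 0"
proof -
  have inner: "(\<Sum>k<n. cis (- (real l * fourier_angle n 0 k))) = (if l = 0 then of_nat n else 0)"
    if l: "l < n" for l
  proof -
    have "(\<Sum>k<n. cis (- (real l * fourier_angle n 0 k))) =
        (\<Sum>k<n. cis (- (real k * fourier_angle n 0 l)))"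
      by (intro sum.cong refl) (simp add: fourier_angle_def ac_simps)
    then show ?thesis using sum_cis_fourier_angle[OF _ l] n by simp
  qed
  have "(\<Sum>k<n. cycle_green_dft n k) =
      (\<Sum>l<n. complex_of_real (cycle_green n l) * (\<Sum>k<n. cis (- (real l * fourier_angle n 0 k))))"
    unfolding cycle_green_dft_def by (subst sum.swap) (simp add: sum_distrib_left algebra_simps)
  also have "\<dots> = (\<Sum>l<n. complex_of_real (cycle_green n l) * (if l = 0 then of_nat n else 0))"
    by (intro sum.cong refl) (simp add: inner)
  also have "\<dots> = 0"
    by (simp add: cycle_green_def if_distrib cong: if_cong)
  finally show ?thesis .
qed

lemma cycle_green_dft_0:
  assumes n: "n \<ge> 3"
  shows "cycle_green_dft n 0 = - complex_of_real ((real n ^ 2 - 1) / 12)"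
proof -
  have sum_id: "(\<Sum>l<m. real l) = real m * (real m - 1) / 2" for m
    by (induction m) (auto simp: field_simps)
  have sum_square: "(\<Sum>l<m. real l ^ 2) = real m * (real m - 1) * (2 * real m - 1) / 6" for m
    by (induction m) (auto simp: field_simps power2_eq_square)
  have "(\<Sum>l<n. real l * (real n - real l)) = real n * (\<Sum>l<n. real l) - (\<Sum>l<n. real l ^ 2)"
    by (simp add: sum_distrib_left sum_subtractf algebra_simps power2_eq_square)
  also have "\<dots> = real n * (real n * (real n - 1) / 2) - real n * (real n - 1) * (2 * real n - 1) / 6"
    by (simp only: sum_id sum_square)
  also have "\<dots> = real n * (real n ^ 2 - 1) / 6"
    by (simp add: field_simps power2_eq_square)
  finally have quadratic: "(\<Sum>l<n. real l * (real n - real l)) = real n * (real n ^ 2 - 1) / 6" .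
  have "(\<Sum>l<n. cycle_green n l) = - (\<Sum>l<n. real l * (real n - real l)) / (2 * real n)"
    by (simp add: cycle_green_def sum_divide_distrib sum_negf)
  also have "\<dots> = - ((real n ^ 2 - 1) / 12)"
    unfolding quadratic using n by (simp add: field_simps)
  finally have "(\<Sum>l<n. cycle_green n l) = - ((real n ^ 2 - 1) / 12)" .
  moreover have "cycle_green_dft n 0 = complex_of_real (\<Sum>l<n. cycle_green n l)"
    by (simp add: cycle_green_dft_def fourier_angle_def)
  ultimately show ?thesis by simp
qed

lemma sum_inverse_cycle_eigenvalues:
  assumes n: "n \<ge> 3"
  shows "(\<Sum>k\<in>{1..<n}. 1 / (2 - 2 * cos (fourier_angle n 0 k))) = (real n ^ 2 - 1) / 12"
proof -
  have "complex_of_real (1 / (2 - 2 * cos (fourier_angle n 0 k))) = cycle_green_dft n k"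
    if "k \<in> {1..<n}" for k
    using inverse_unique[OF cycle_eigenvalue_mult_cycle_green_dft[OF n]] that
    by (simp add: divide_inverse)
  then have "complex_of_real (\<Sum>k\<in>{1..<n}. 1 / (2 - 2 * cos (fourier_angle n 0 k))) =
      (\<Sum>k\<in>{1..<n}. cycle_green_dft n k)"
    unfolding of_real_sum by (rule sum.cong[OF refl])
  also have "\<dots> = (\<Sum>k<n. cycle_green_dft n k) - cycle_green_dft n 0"
    using n by (simp add: lessThan_atLeast0 atLeastLessThan_nat_numeral sum.atLeast_Suc_lessThan)
  also have "\<dots> = complex_of_real ((real n ^ 2 - 1) / 12)"
    using sum_cycle_green_dft[OF n] cycle_green_dft_0[OF n] by simp
  finally show ?thesis by (simp only: of_real_eq_iff)
qed

lemma char_poly_cycle_mat: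
  assumes n: "n \<ge> 3"
  shows "char_poly (twisted_cycle_mat n 2 1) =
    (\<Prod>x\<leftarrow>0 # map (\<lambda>k. 2 - 2 * cos (fourier_angle n 0 k)) [1..<n]. [:-x, 1:])"
proof -
  have "fourier_angle n 0 0 = 0" by (simp add: fourier_angle_def)
  then show ?thesis
    using char_poly_twisted_cycle_mat[OF n, of 0 1 2] n by (simp add: upt_conv_Cons)
qed

lemma char_poly_L_S:
  assumes n: "n \<ge> 3"
  shows "char_poly (L_S n) =
    (\<Prod>x\<leftarrow>map (\<lambda>k. 4 - 2 * cos (fourier_angle n pi k)) [0..<n]. [:-x, 1:])"
  unfolding L_S_eq_twisted_cycle_mat using char_poly_twisted_cycle_mat[OF n, of pi "-1" 4] by simp

lemma four_minus_two_cos_pos: "4 - 2 * cos x > (0 :: real)"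
  using cos_le_one[of x] by linarith

lemma kirchhoff_index_mobius_laplacian:
  assumes n: "n \<ge> 3"
  shows "kirchhoff_index (mobius_laplacian n) = real (2 * n) *
    ((real n ^ 2 - 1) / 12 + (\<Sum>k<n. 1 / (4 - 2 * cos (fourier_angle n pi k))))"
proof -
  define \<mu>s where "\<mu>s = map (\<lambda>k. 2 - 2 * cos (fourier_angle n 0 k)) [1..<n]"
  define \<beta>s where "\<beta>s = map (\<lambda>k. 4 - 2 * cos (fourier_angle n pi k)) [0..<n]"
  have "kirchhoff_index (mobius_laplacian n) = real (2 * n) * (\<Sum>x\<leftarrow>\<mu>s @ \<beta>s. 1 / x)"
  proof (rule kirchhoff_index_eq_sum_inverse)
    show "mobius_laplacian n \<in> carrier_mat (2 * n) (2 * n)"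
      by (simp add: mobius_laplacian_def)
    show "length (\<mu>s @ \<beta>s) + 1 = 2 * n"
      using n by (simp add: \<mu>s_def \<beta>s_def)
    show "char_poly (mobius_laplacian n) = (\<Prod>x\<leftarrow>0 # \<mu>s @ \<beta>s. [:-x, 1:])"
      using n by (simp add: char_poly_mobius_laplacian char_poly_cycle_mat char_poly_L_S
          \<mu>s_def \<beta>s_def mult.assoc)
    show "\<forall>x\<in>set (\<mu>s @ \<beta>s). x > 0"
      using cycle_eigenvalue_pos[OF n] four_minus_two_cos_pos by (auto simp: \<mu>s_def \<beta>s_def)
  qed
  then show ?thesis
    using sum_inverse_cycle_eigenvalues[OF n]
    by (simp add: \<mu>s_def \<beta>s_def interv_sum_list_conv_sum_set_nat o_def lessThan_atLeast0)
qed

theorem lemma3p1: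
  fixes n :: nat
  assumes "n \<ge> 3"
  shows "\<exists>\<beta>s :: real list. length \<beta>s = n \<and>
           char_poly (L_S n) = (\<Prod>b\<leftarrow>\<beta>s. [:-b, 1:]) \<and>
           (\<forall>b\<in>set \<beta>s. b > 0) \<and>
           kirchhoff_index (mobius_laplacian n) =
             (real n ^ 3 - real n) / 6 + 2 * real n * (\<Sum>b\<leftarrow>\<beta>s. 1 / b)"
proof -
  let ?\<beta>s = "map (\<lambda>k. 4 - 2 * cos (fourier_angle n pi k)) [0..<n]"
  have "kirchhoff_index (mobius_laplacian n) =
      (real n ^ 3 - real n) / 6 + 2 * real n * (\<Sum>b\<leftarrow>?\<beta>s. 1 / b)"
    unfolding kirchhoff_index_mobius_laplacian[OF assms]
    by (simp add: interv_sum_list_conv_sum_set_nat o_def lessThan_atLeast0 field_simps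
        power2_eq_square power3_eq_cube)
  then show ?thesis
    using char_poly_L_S[OF assms] four_minus_two_cos_pos by (intro exI[of _ ?\<beta>s]) auto
qed

end
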